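(* For every $n>0$: (1) $L_{\mathrm{RCC5}}(\mathcal{RS}^5)=L^{\mathrm S}_{\mathrm{RCC5}}(\mathcal{TOP})=L^{\mathrm S}_{\mathrm{RCC5}}(\mathbb R^n,\mathbb R^n_{\mathrm{reg}})$; (2) $L^{\mathrm{fin}}_{\mathrm{RCC5}}(\mathcal{RS}^5)=L^{\mathrm{fin}}_{\mathrm{RCC5}}(\mathcal{TOP})=L^{\mathrm{fin}}_{\mathrm{RCC5}}(\mathbb R^n,\mathbb R^n_{\mathrm{reg}})$.
   Context: Topology: interior $\mathbb I$, closure $\mathbb C$; regular closed: $\mathbb C\mathbb I(s)=s$; $\mathfrak T_{\mathrm{reg}}$ non-empty regular closed subsets; $\mathbb R^n$ Euclidean. Concrete RCC5-structure $\mathfrak R^5(\mathfrak T,U)$: domain $U$ (set of non-empty regular closed sets), relations $\mathrm{eq}$ ($s=t$), $\mathrm{po}$ ($\mathbb Is\cap\mathbb It\ne\emptyset$, $s\not\subseteq t$, $t\not\subseteq s$), $\mathrm{dr}$ ($\mathbb Is\cap\mathbb It=\emptyset$), $\mathrm{pp}$ ($s\subseteq t$, $s\ne t$), $\mathrm{ppi}$ (inverse of $\mathrm{pp}$). $\mathcal{TOP}$ here is the class of all $\mathfrak R^5(\mathfrak T,\mathfrak T_{\mathrm{reg}})$. $\mathcal{RS}^5$ is the class of general RCC5-structures: non-empty $W$ with five mutually disjoint jointly exhaustive relations $\mathrm{dr},\mathrm{eq},\mathrm{pp},\mathrm{ppi},\mathrm{po}$, $\mathrm{eq}$ identity, $\mathrm{po},\mathrm{dr}$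 symmetric, $\mathrm{pp}$ inverse of $\mathrm{ppi}$, satisfying the standard RCC5 composition table. $\mathcal L_{\mathrm{RCC5}}$: modal language with propositional variables, $\neg,\wedge$ and a box $[r]$ per RCC5 relation. $L_{\mathrm{RCC5}}(\mathcal S)$: formulas valid in all models on members of $\mathcal S$; $L^{\mathrm S}_{\mathrm{RCC5}}(\mathcal S)$: valid in all substructures of members; $L^{\mathrm{fin}}_{\mathrm{RCC5}}(\mathcal S)$: valid in all finite substructures of members. *)

theory Defs
  imports "HOL-Analysis.Analysis"
begin

datatype rel5 = DR | EQ | PP | PPI | PO

datatype fm = Var nat | Neg fm | Conj fm fm | Box rel5 fm

fun sat :: "'w set \<Rightarrow> (rel5 \<Rightarrow> 'w \<Rightarrow> 'w \<Rightarrow> bool) \<Rightarrow> (nat \<Rightarrow> 'w set) \<Rightarrow> 'w \<Rightarrow> fm \<Rightarrow> bool"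
where
  "sat W R V x (Var p) = (x \<in> V p)"
| "sat W R V x (Neg \<phi>) = (\<not> sat W R V x \<phi>)"
| "sat W R V x (Conj \<phi> \<psi>) = (sat W R V x \<phi> \<and> sat W R V x \<psi>)"
| "sat W R V x (Box r \<phi>) = (\<forall>y\<in>W. R r x y \<longrightarrow> sat W R V y \<phi>)"

definition valid_in :: "'w set \<Rightarrow> (rel5 \<Rightarrow> 'w \<Rightarrow> 'w \<Rightarrow> bool) \<Rightarrow> fm \<Rightarrow> bool" where
  "valid_in W R \<phi> \<longleftrightarrow> (\<forall>V. \<forall>x\<in>W. sat W R V x \<phi>)"

text \<open>Standard RCC5 composition table: comp r s lists the possible relations
between x and z when r x y and s y z.\<close>

fun comp5 :: "rel5 \<Rightarrow> rel5 \<Rightarrow> rel5 set" where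
  "comp5 EQ s = {s}"
| "comp5 r EQ = {r}"
| "comp5 DR DR = UNIV"
| "comp5 DR PO = {DR, PO, PP}"
| "comp5 DR PP = {DR, PO, PP}"
| "comp5 DR PPI = {DR}"
| "comp5 PO DR = {DR, PO, PPI}"
| "comp5 PO PO = UNIV"
| "comp5 PO PP = {PO, PP}"
| "comp5 PO PPI = {DR, PO, PPI}"
| "comp5 PP DR = {DR}"
| "comp5 PP PO = {DR, PO, PP}"
| "comp5 PP PP = {PP}"
| "comp5 PP PPI = UNIV"
| "comp5 PPI DR = {DR, PO, PPI}"
| "comp5 PPI PO = {PO, PPI}"
| "comp5 PPI PP = {PO, EQ, PP, PPI}"
| "comp5 PPI PPI = {PPI}"

definition rcc5_structure :: "'w set \<Rightarrow> (rel5 \<Rightarrow> 'w \<Rightarrow> 'w \<Rightarrow> bool) \<Rightarrow> bool" where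
  "rcc5_structure W R \<longleftrightarrow>
     W \<noteq> {} \<and>
     (\<forall>x\<in>W. \<forall>y\<in>W. \<exists>!r. R r x y) \<and>
     (\<forall>x\<in>W. \<forall>y\<in>W. R EQ x y \<longleftrightarrow> x = y) \<and>
     (\<forall>x\<in>W. \<forall>y\<in>W. R PO x y \<longleftrightarrow> R PO y x) \<and>
     (\<forall>x\<in>W. \<forall>y\<in>W. R DR x y \<longleftrightarrow> R DR y x) \<and>
     (\<forall>x\<in>W. \<forall>y\<in>W. R PP x y \<longleftrightarrow> R PPI y x) \<and>
     (\<forall>x\<in>W. \<forall>y\<in>W. \<forall>z\<in>W. \<forall>r s. R r x y \<and> R s y z \<longrightarrow> (\<exists>t\<in>comp5 r s. R t x z))"

definition regular_closed_regions :: "'a topology \<Rightarrow> 'a set set" where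
  "regular_closed_regions X =
     {s. s \<noteq> {} \<and> X closure_of (X interior_of s) = s}"

fun top_rel :: "'a topology \<Rightarrow> rel5 \<Rightarrow> 'a set \<Rightarrow> 'a set \<Rightarrow> bool" where
  "top_rel X EQ s t = (s = t)"
| "top_rel X PO s t = (X interior_of s \<inter> X interior_of t \<noteq> {} \<and> \<not> s \<subseteq> t \<and> \<not> t \<subseteq> s)"
| "top_rel X DR s t = (X interior_of s \<inter> X interior_of t = {})"
| "top_rel X PP s t = (s \<subseteq> t \<and> s \<noteq> t)"
| "top_rel X PPI s t = (t \<subseteq> s \<and> t \<noteq> s)"

definition L_RS5 :: "'w itself \<Rightarrow> fm set" where
  "L_RS5 _ = {\<phi>. \<forall>(W::'w set) R. rcc5_structure W R \<longrightarrow> valid_in W R \<phi>}"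

definition Lfin_RS5 :: "'w itself \<Rightarrow> fm set" where
  "Lfin_RS5 _ = {\<phi>. \<forall>(W::'w set) R U. rcc5_structure W R \<and> U \<subseteq> W \<and> U \<noteq> {} \<and> finite U
                      \<longrightarrow> valid_in U R \<phi>}"

definition LS_space :: "'a topology \<Rightarrow> fm set" where
  "LS_space X = {\<phi>. \<forall>U. U \<subseteq> regular_closed_regions X \<and> U \<noteq> {} \<longrightarrow> valid_in U (top_rel X) \<phi>}"

definition Lfin_space :: "'a topology \<Rightarrow> fm set" where
  "Lfin_space X = {\<phi>. \<forall>U. U \<subseteq> regular_closed_regions X \<and> U \<noteq> {} \<and> finite U
                          \<longrightarrow> valid_in U (top_rel X) \<phi>}"

text \<open>The same for the class TOP, restricted to spaces whose points have type 'a.\<close>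
definition LS_TOP :: "'a itself \<Rightarrow> fm set" where
  "LS_TOP _ = (\<Inter>X::'a topology \<in> UNIV. LS_space X)"

definition Lfin_TOP :: "'a itself \<Rightarrow> fm set" where
  "Lfin_TOP _ = (\<Inter>X::'a topology \<in> UNIV. Lfin_space X)"

end

theory Submission
  imports Defs "HOL-Library.Countable"
begin

(* Regular closed sets under the topological relations form an RCC5-structure, so a formula
   valid in all RCC5-structures is valid in every substructure of every space.  Conversely,
   every countable RCC5-structure is isomorphic to a substructure of the regular closed sets
   of R^n: send x to the set of atoms consisting of its parts u and of the PO-pairs (u, v) with
   a member below x, so that inclusion becomes parthood and disjointness becomes DR; then
   number the atoms, send atom k to the k-th of a sequence of pairwise disjoint open balls and
   take the closure of the union.  Since the language is countable, a formula refuted at a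
   point of an RCC5-structure is refuted there in a countable substructure closed under
   witnesses for boxes, and finite substructures embed directly. *)

section \<open>RCC5-structures as systems of atoms\<close>

lemma rcc5_structure_subset: "rcc5_structure W R \<Longrightarrow> U \<subseteq> W \<Longrightarrow> U \<noteq> {} \<Longrightarrow> rcc5_structure U R"
  unfolding rcc5_structure_def by (meson subsetD)

definition part_of :: "(rel5 \<Rightarrow> 'w \<Rightarrow> 'w \<Rightarrow> bool) \<Rightarrow> 'w \<Rightarrow> 'w \<Rightarrow> bool" where
  "part_of R x y \<longleftrightarrow> x = y \<or> R PP x y"

definition rcc5_atoms ::
  "'w set \<Rightarrow> (rel5 \<Rightarrow> 'w \<Rightarrow> 'w \<Rightarrow> bool) \<Rightarrow> 'w \<Rightarrow> ('w + 'w \<times> 'w) set"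
where
  "rcc5_atoms W R x =
     Inl ` {u \<in> W. part_of R u x} \<union>
     Inr ` {(u, v) \<in> W \<times> W. R PO u v \<and> (part_of R u x \<or> part_of R v x)}"

context
  fixes W :: "'w set" and R :: "rel5 \<Rightarrow> 'w \<Rightarrow> 'w \<Rightarrow> bool"
  assumes rcc5: "rcc5_structure W R"
begin

lemma rcc5_rel_unique: "x \<in> W \<Longrightarrow> y \<in> W \<Longrightarrow> R r x y \<Longrightarrow> R s x y \<Longrightarrow> r = s"
  using rcc5 unfolding rcc5_structure_def by metis

lemma rcc5_rel_exists: "x \<in> W \<Longrightarrow> y \<in> W \<Longrightarrow> \<exists>r. R r x y"
  using rcc5 unfolding rcc5_structure_def by metis

lemma rcc5_EQ_iff: "x \<in> W \<Longrightarrow> y \<in> W \<Longrightarrow> R EQ x y \<longleftrightarrow> x = y"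
  using rcc5 unfolding rcc5_structure_def by metis

lemma rcc5_DR_sym: "x \<in> W \<Longrightarrow> y \<in> W \<Longrightarrow> R DR x y \<Longrightarrow> R DR y x"
  using rcc5 unfolding rcc5_structure_def by metis

lemma rcc5_PP_iff_PPI: "x \<in> W \<Longrightarrow> y \<in> W \<Longrightarrow> R PP x y \<longleftrightarrow> R PPI y x"
  using rcc5 unfolding rcc5_structure_def by metis

lemma rcc5_comp:
  assumes "x \<in> W" "y \<in> W" "z \<in> W" "R r x y" "R s y z" "R t x z"
  shows "t \<in> comp5 r s"
proof -
  obtain t' where "t' \<in> comp5 r s" "R t' x z"
    using rcc5 assms(1-5) unfolding rcc5_structure_def by meson
  with rcc5_rel_unique assms show ?thesis by metis
qed

lemma rcc5_not_DR_refl: "x \<in> W \<Longrightarrow> \<not> R DR x x"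
  by (metis rcc5_EQ_iff rcc5_rel_unique rel5.distinct(1))

lemma rcc5_not_PP_refl: "x \<in> W \<Longrightarrow> \<not> R PP x x"
  by (metis rcc5_EQ_iff rcc5_rel_unique rel5.distinct(9))

lemma part_of_trans:
  assumes "u \<in> W" "x \<in> W" "y \<in> W" "part_of R u x" "part_of R x y"
  shows "part_of R u y"
proof -
  obtain t where "R t u y" using rcc5_rel_exists assms by blast
  with assms rcc5_comp[of u x y PP PP t] show ?thesis by (auto simp: part_of_def)
qed

lemma part_of_antisym: "x \<in> W \<Longrightarrow> y \<in> W \<Longrightarrow> part_of R x y \<Longrightarrow> part_of R y x \<Longrightarrow> x = y"
  unfolding part_of_def using rcc5_PP_iff_PPI rcc5_rel_unique by fastforce

lemma rcc5_DR_part_of: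
  assumes "u \<in> W" "x \<in> W" "y \<in> W" "part_of R u x" "R DR x y"
  shows "R DR u y"
proof -
  obtain t where "R t u y" using rcc5_rel_exists assms by blast
  with assms rcc5_comp[of u x y PP DR t] show ?thesis by (auto simp: part_of_def)
qed

lemma rcc5_PO_iff:
  assumes "x \<in> W" "y \<in> W"
  shows "R PO x y \<longleftrightarrow> \<not> R DR x y \<and> \<not> part_of R x y \<and> \<not> part_of R y x"
proof -
  obtain r where "R r x y" using rcc5_rel_exists assms by blast
  with assms show ?thesis
    unfolding part_of_def
    by (cases r) (metis rcc5_EQ_iff rcc5_PP_iff_PPI rcc5_rel_unique rel5.distinct)+
qed

lemma rcc5_atoms_subset_iff:
  assumes "x \<in> W" "y \<in> W"
  shows "rcc5_atoms W R x \<subseteq> rcc5_atoms W R y \<longleftrightarrow> part_of R x y"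
proof
  assume "rcc5_atoms W R x \<subseteq> rcc5_atoms W R y"
  moreover have "Inl x \<in> rcc5_atoms W R x"
    using assms by (simp add: rcc5_atoms_def part_of_def)
  ultimately show "part_of R x y"
    unfolding rcc5_atoms_def by auto
next
  assume "part_of R x y"
  with assms part_of_trans show "rcc5_atoms W R x \<subseteq> rcc5_atoms W R y"
    unfolding rcc5_atoms_def by blast
qed

lemma rcc5_atoms_disjoint_iff:
  assumes "x \<in> W" "y \<in> W"
  shows "rcc5_atoms W R x \<inter> rcc5_atoms W R y = {} \<longleftrightarrow> R DR x y"
proof
  assume disjoint: "rcc5_atoms W R x \<inter> rcc5_atoms W R y = {}"
  obtain r where r: "R r x y" using rcc5_rel_exists assms by blast
  show "R DR x y"
  proof (cases r)
    case PO
    then have "Inr (x, y) \<in> rcc5_atoms W R x \<inter> rcc5_atoms W R y"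
      using assms r by (auto simp: rcc5_atoms_def part_of_def)
    with disjoint show ?thesis by blast
  next
    case PPI
    then have "Inl y \<in> rcc5_atoms W R x \<inter> rcc5_atoms W R y"
      using assms r rcc5_PP_iff_PPI by (auto simp: rcc5_atoms_def part_of_def)
    with disjoint show ?thesis by blast
  next
    case EQ
    then have "Inl x \<in> rcc5_atoms W R x \<inter> rcc5_atoms W R y"
      using assms r rcc5_EQ_iff by (auto simp: rcc5_atoms_def part_of_def)
    with disjoint show ?thesis by blast
  next
    case PP
    then have "Inl x \<in> rcc5_atoms W R x \<inter> rcc5_atoms W R y"
      using assms r by (auto simp: rcc5_atoms_def part_of_def)
    with disjoint show ?thesis by blast
  qed (use r in simp)
next
  assume "R DR x y"
  \<comment> \<open>DR passes to parts, so a common atom would make some u DR to itself or a PO-pair DR\<close>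
  then have "R DR u v" if "u \<in> W" "v \<in> W" "part_of R u x" "part_of R v y" for u v
    using that assms rcc5_DR_part_of rcc5_DR_sym by metis
  then show "rcc5_atoms W R x \<inter> rcc5_atoms W R y = {}"
    unfolding rcc5_atoms_def
    using rcc5_not_DR_refl rcc5_PO_iff rcc5_DR_sym by blast
qed

lemma inj_on_if_parthood_represented:
  assumes "\<And>x y. x \<in> W \<Longrightarrow> y \<in> W \<Longrightarrow> f x \<subseteq> f y \<longleftrightarrow> part_of R x y"
  shows "inj_on f W"
proof (rule inj_onI)
  fix x y assume "x \<in> W" "y \<in> W" "f x = f y"
  with assms part_of_antisym show "x = y" by (metis order_refl)
qed

lemma rcc5_rel_eq_top_rel_if_represented:
  assumes subset_iff: "\<And>x y. x \<in> W \<Longrightarrow> y \<in> W \<Longrightarrow> f x \<subseteq> f y \<longleftrightarrow> part_of R x y"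
    and disjoint_iff:
      "\<And>x y. x \<in> W \<Longrightarrow> y \<in> W \<Longrightarrow> X interior_of f x \<inter> X interior_of f y = {} \<longleftrightarrow> R DR x y"
    and "x \<in> W" "y \<in> W"
  shows "R r x y \<longleftrightarrow> top_rel X r (f x) (f y)"
proof -
  have eq_iff: "f x = f y \<longleftrightarrow> x = y"
    using inj_on_if_parthood_represented[OF subset_iff] assms(3,4) inj_on_eq_iff by metis
  show ?thesis
  proof (cases r)
    case DR
    then show ?thesis using disjoint_iff[OF assms(3,4)] by simp
  next
    case EQ
    then show ?thesis using eq_iff rcc5_EQ_iff[OF assms(3,4)] by simp
  next
    case PP
    then show ?thesis using subset_iff[OF assms(3,4)] eq_iff rcc5_not_PP_refl[OF assms(3)]
      unfolding part_of_def by auto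
  next
    case PPI
    then show ?thesis
      using subset_iff[OF assms(4,3)] eq_iff rcc5_not_PP_refl[OF assms(3)] rcc5_PP_iff_PPI[OF assms(4,3)]
      unfolding part_of_def by auto
  next
    case PO
    then show ?thesis
      using subset_iff[OF assms(3,4)] subset_iff[OF assms(4,3)] disjoint_iff[OF assms(3,4)]
        rcc5_PO_iff[OF assms(3,4)] by auto
  qed
qed

end

section \<open>Regular closed sets form RCC5-structures\<close>

lemma top_rel_exists: "\<exists>r. top_rel X r s t"
  by (metis top_rel.simps subset_antisym)

lemma top_rel_unique:
  assumes "X interior_of s \<noteq> {}" "X interior_of t \<noteq> {}" "top_rel X r s t" "top_rel X r' s t"
  shows "r = r'"
  using assms interior_of_mono[of s t X] interior_of_mono[of t s X]
  by (cases r; cases r') auto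

lemma top_rel_comp:
  assumes "X interior_of s \<noteq> {}" "X interior_of t \<noteq> {}" "X interior_of u \<noteq> {}"
    and "top_rel X r s t" "top_rel X r' t u" "top_rel X r'' s u"
  shows "r'' \<in> comp5 r r'"
proof -
  \<comment> \<open>Hiding inclusion and interior-disjointness behind opaque predicates keeps metis fast
      on the 125 cases of the composition table.\<close>
  define D where "D p q \<longleftrightarrow> X interior_of p \<inter> X interior_of q = {}" for p q
  define S where "S p q \<longleftrightarrow> p \<subseteq> q" for p q :: "'a set"
  have top_rel_D_S: "top_rel X r p q \<longleftrightarrow> (case r of EQ \<Rightarrow> p = q | DR \<Rightarrow> D p q
      | PO \<Rightarrow> \<not> D p q \<and> \<not> S p q \<and> \<not> S q p | PP \<Rightarrow> S p q \<and> p \<noteq> q | PPI \<Rightarrow> S q p \<and> q \<noteq> p)"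
    for r p q
    by (cases r) (auto simp: D_def S_def)
  have S_not_D: "S p q \<Longrightarrow> \<not> D p q" if "p \<in> {s, t, u}" for p q
    using assms(1-3) that interior_of_mono[of p q X] unfolding D_def S_def by blast
  then have S_not_D_s: "\<And>q. S s q \<Longrightarrow> \<not> D s q" and S_not_D_t: "\<And>q. S t q \<Longrightarrow> \<not> D t q"
    and S_not_D_u: "\<And>q. S u q \<Longrightarrow> \<not> D u q"
    by auto
  have D_S: "D p q \<Longrightarrow> S w q \<Longrightarrow> D p w" for p q w
    using interior_of_mono[of w q X] unfolding D_def S_def by blast
  have D_sym: "D p q \<Longrightarrow> D q p" for p q
    unfolding D_def by blast
  have S_trans: "S p q \<Longrightarrow> S q w \<Longrightarrow> S p w" and S_antisym: "S p q \<Longrightarrow> S q p \<Longrightarrow> p = q"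
    and S_refl: "S p p" for p q w
    unfolding S_def by auto
  show ?thesis
    using assms(4-6) unfolding top_rel_D_S
    by (cases r; cases r'; cases r''; simp;
        metis S_not_D_s S_not_D_t S_not_D_u D_S D_sym S_trans S_antisym S_refl)
qed

lemma rcc5_structure_top_rel:
  assumes "U \<noteq> {}" and interior_nonempty: "\<And>s. s \<in> U \<Longrightarrow> X interior_of s \<noteq> {}"
  shows "rcc5_structure U (top_rel X)"
  unfolding rcc5_structure_def
proof (intro conjI ballI allI impI)
  show "U \<noteq> {}" by fact
next
  fix s t assume "s \<in> U" "t \<in> U"
  then show "\<exists>!r. top_rel X r s t"
    using top_rel_exists top_rel_unique interior_nonempty by metis
  show "top_rel X EQ s t \<longleftrightarrow> s = t" "top_rel X PO s t \<longleftrightarrow> top_rel X PO t s"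
    "top_rel X DR s t \<longleftrightarrow> top_rel X DR t s" "top_rel X PP s t \<longleftrightarrow> top_rel X PPI t s"
    by auto
next
  fix s t u r r' assume "s \<in> U" "t \<in> U" "u \<in> U" and rel: "top_rel X r s t \<and> top_rel X r' t u"
  obtain r'' where r'': "top_rel X r'' s u"
    using top_rel_exists by blast
  have "r'' \<in> comp5 r r'"
    using top_rel_comp[OF interior_nonempty interior_nonempty interior_nonempty] rel r''
      \<open>s \<in> U\<close> \<open>t \<in> U\<close> \<open>u \<in> U\<close> by blast
  with r'' show "\<exists>r''\<in>comp5 r r'. top_rel X r'' s u"
    by blast
qed

lemma rcc5_structure_regular_closed_regions:
  assumes "U \<subseteq> regular_closed_regions X" "U \<noteq> {}"
  shows "rcc5_structure U (top_rel X)"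
proof (rule rcc5_structure_top_rel)
  show "U \<noteq> {}" by fact
  show "X interior_of s \<noteq> {}" if "s \<in> U" for s
    using that assms(1) unfolding regular_closed_regions_def by auto
qed

section \<open>Realising countable RCC5-structures by regular closed sets\<close>

lemma closure_of_interior_of_closure_of_openin:
  assumes "openin X U"
  shows "X closure_of (X interior_of (X closure_of U)) = X closure_of U"
proof
  show "X closure_of (X interior_of (X closure_of U)) \<subseteq> X closure_of U"
    by (metis closure_of_closure_of closure_of_mono interior_of_subset)
  have "U \<subseteq> X interior_of (X closure_of U)"
    using assms by (simp add: closure_of_subset interior_of_maximal openin_subset)
  then show "X closure_of U \<subseteq> X closure_of (X interior_of (X closure_of U))"
    by (rule closure_of_mono)
qed

lemma openin_subset_interior_of_closure_of:
  "openin X U \<Longrightarrow> U \<subseteq> X interior_of (X closure_of U)"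
  by (simp add: closure_of_subset interior_of_maximal openin_subset)

lemma interior_of_closure_of_disjoint_iff:
  assumes "openin X U" "openin X V"
  shows "X interior_of (X closure_of U) \<inter> X interior_of (X closure_of V) = {} \<longleftrightarrow> U \<inter> V = {}"
proof
  show "X interior_of (X closure_of U) \<inter> X interior_of (X closure_of V) = {} \<Longrightarrow> U \<inter> V = {}"
    using openin_subset_interior_of_closure_of[OF assms(1)]
      openin_subset_interior_of_closure_of[OF assms(2)] by blast
next
  assume "U \<inter> V = {}"
  then have "U \<inter> X closure_of V = {}"
    by (simp add: assms(1) openin_Int_closure_of_eq_empty)
  then have "X interior_of (X closure_of V) \<inter> U = {}"
    using interior_of_subset[of X "X closure_of V"] by blast
  then have "X interior_of (X closure_of V) \<inter> X closure_of U = {}"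
    by (simp add: openin_Int_closure_of_eq_empty)
  then show "X interior_of (X closure_of U) \<inter> X interior_of (X closure_of V) = {}"
    using interior_of_subset[of X "X closure_of U"] by blast
qed

lemma closure_of_Union_subset_iff:
  assumes "disjoint_family_on C A" and "\<And>a. a \<in> A \<Longrightarrow> openin X (C a) \<and> C a \<noteq> {}"
    and "K \<subseteq> A" "L \<subseteq> A"
  shows "X closure_of \<Union>(C ` K) \<subseteq> X closure_of \<Union>(C ` L) \<longleftrightarrow> K \<subseteq> L"
proof
  assume closure_subset: "X closure_of \<Union>(C ` K) \<subseteq> X closure_of \<Union>(C ` L)"
  show "K \<subseteq> L"
  proof
    fix k assume "k \<in> K"
    with assms(2,3) have open_k: "openin X (C k)" and nonempty_k: "C k \<noteq> {}"
      by auto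
    have "C k \<subseteq> X closure_of \<Union>(C ` K)"
      using \<open>k \<in> K\<close> closure_of_subset[OF openin_subset[OF open_k]] closure_of_mono[of "C k"]
      by blast
    with closure_subset nonempty_k have "C k \<inter> X closure_of \<Union>(C ` L) \<noteq> {}"
      by blast
    then have "C k \<inter> \<Union>(C ` L) \<noteq> {}"
      by (simp add: open_k openin_Int_closure_of_eq_empty)
    then obtain l where "l \<in> L" "C k \<inter> C l \<noteq> {}"
      by blast
    with assms(1,3,4) \<open>k \<in> K\<close> have "k = l"
      unfolding disjoint_family_on_def by blast
    with \<open>l \<in> L\<close> show "k \<in> L" by simp
  qed
qed (intro closure_of_mono Union_mono image_mono)

definition disjoint_open_sequence :: "'a topology \<Rightarrow> (nat \<Rightarrow> 'a set) \<Rightarrow> bool" where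
  "disjoint_open_sequence X B \<longleftrightarrow> disjoint_family B \<and> (\<forall>k. openin X (B k) \<and> B k \<noteq> {})"

lemma disjoint_open_sequence_euclidean_space:
  "\<exists>B. disjoint_open_sequence (euclidean :: 'a::euclidean_space topology) B"
proof -
  obtain b :: 'a where "b \<in> Basis" using nonempty_Basis by blast
  then have "norm b = 1" by (rule norm_Basis)
  define B where "B k = ball (real k *\<^sub>R b) (1/2)" for k
  have "B k \<inter> B l = {}" if "k \<noteq> l" for k l
  proof -
    have "1 \<le> \<bar>real k - real l\<bar>" using that by linarith
    also have "\<dots> = dist (real k *\<^sub>R b) (real l *\<^sub>R b)"
      using \<open>norm b = 1\<close> by (simp add: dist_norm flip: scaleR_diff_left)
    finally show ?thesis
      unfolding B_def using dist_triangle_half_r[of _ "real k *\<^sub>R b" 1 "real l *\<^sub>R b"]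
      by (force simp: dist_commute)
  qed
  then have "disjoint_open_sequence euclidean B"
    unfolding disjoint_open_sequence_def disjoint_family_on_def by (simp add: B_def)
  then show ?thesis by blast
qed

lemma Union_disjoint_family_on_disjoint_iff:
  assumes "disjoint_family_on C A" "\<And>a. a \<in> A \<Longrightarrow> C a \<noteq> {}" "K \<subseteq> A" "L \<subseteq> A"
  shows "\<Union>(C ` K) \<inter> \<Union>(C ` L) = {} \<longleftrightarrow> K \<inter> L = {}"
proof
  show "\<Union>(C ` K) \<inter> \<Union>(C ` L) = {} \<Longrightarrow> K \<inter> L = {}"
    using assms(2,3) by blast
next
  assume "K \<inter> L = {}"
  then have "C k \<inter> C l = {}" if "k \<in> K" "l \<in> L" for k l
    using that assms(3,4) by (intro disjoint_family_onD[OF assms(1)]) auto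
  then show "\<Union>(C ` K) \<inter> \<Union>(C ` L) = {}"
    by blast
qed

lemma countable_rcc5_structure_embedding:
  assumes B: "disjoint_open_sequence X B" and rcc5: "rcc5_structure W R" and "countable W"
  obtains f where "inj_on f W" and "f ` W \<subseteq> regular_closed_regions X"
    and "\<And>x y r. x \<in> W \<Longrightarrow> y \<in> W \<Longrightarrow> R r x y \<longleftrightarrow> top_rel X r (f x) (f y)"
proof -
  define A where "A = Inl ` W \<union> Inr ` (W \<times> W)"
  have "countable A"
    unfolding A_def using \<open>countable W\<close> by simp
  define C where "C a = B (to_nat_on A a)" for a
  have C_disjoint: "disjoint_family_on C A"
    unfolding disjoint_family_on_def
  proof (intro ballI impI)
    fix a a' assume "a \<in> A" "a' \<in> A" "a \<noteq> a'"
    then have "to_nat_on A a \<noteq> to_nat_on A a'"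
      by (simp add: \<open>countable A\<close> inj_on_contraD)
    then show "C a \<inter> C a' = {}"
      using B unfolding disjoint_open_sequence_def C_def by (blast dest: disjoint_family_onD)
  qed
  have C_open: "openin X (C a) \<and> C a \<noteq> {}" for a
    using B unfolding disjoint_open_sequence_def C_def by simp
  have atoms_A: "rcc5_atoms W R x \<subseteq> A" for x
    unfolding rcc5_atoms_def A_def by blast
  define f where "f x = X closure_of \<Union>(C ` rcc5_atoms W R x)" for x
  have open_atoms: "openin X (\<Union>(C ` rcc5_atoms W R x))" for x
    using C_open by blast
  have subset_iff: "f x \<subseteq> f y \<longleftrightarrow> part_of R x y" if "x \<in> W" "y \<in> W" for x y
    unfolding f_def
    using closure_of_Union_subset_iff[OF C_disjoint C_open atoms_A atoms_A]
      rcc5_atoms_subset_iff[OF rcc5 that] by simp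
  have disjoint_iff: "X interior_of f x \<inter> X interior_of f y = {} \<longleftrightarrow> R DR x y"
    if "x \<in> W" "y \<in> W" for x y
  proof -
    have "\<Union>(C ` rcc5_atoms W R x) \<inter> \<Union>(C ` rcc5_atoms W R y) = {} \<longleftrightarrow>
        rcc5_atoms W R x \<inter> rcc5_atoms W R y = {}"
      using Union_disjoint_family_on_disjoint_iff[OF C_disjoint _ atoms_A atoms_A] C_open by blast
    then show ?thesis
      unfolding f_def interior_of_closure_of_disjoint_iff[OF open_atoms open_atoms]
      using rcc5_atoms_disjoint_iff[OF rcc5 that] by simp
  qed
  have "f x \<in> regular_closed_regions X" if "x \<in> W" for x
  proof -
    have "Inl x \<in> rcc5_atoms W R x"
      using that by (simp add: rcc5_atoms_def part_of_def)
    then have "\<Union>(C ` rcc5_atoms W R x) \<noteq> {}"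
      using C_open by blast
    then show ?thesis
      unfolding regular_closed_regions_def f_def
      by (simp add: closure_of_interior_of_closure_of_openin open_atoms closure_of_eq_empty
          openin_subset)
  qed
  then show thesis
    using inj_on_if_parthood_represented[OF rcc5 subset_iff]
      rcc5_rel_eq_top_rel_if_represented[OF rcc5 subset_iff disjoint_iff]
    by (intro that) auto
qed

section \<open>Countable witness-closed substructures\<close>

instance rel5 :: countable by countable_datatype
instance fm :: countable by countable_datatype

text \<open>If u has no r-successor refuting \<psi>, the witness defaults to u itself, so that
  witness closures stay inside W.\<close>

definition witness ::
  "'w set \<Rightarrow> (rel5 \<Rightarrow> 'w \<Rightarrow> 'w \<Rightarrow> bool) \<Rightarrow> (nat \<Rightarrow> 'w set) \<Rightarrow> rel5 \<times> fm \<Rightarrow> 'w \<Rightarrow> 'w"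
where
  "witness W R V = (\<lambda>(r, \<psi>) u.
     if \<exists>y\<in>W. R r u y \<and> \<not> sat W R V y \<psi>
     then SOME y. y \<in> W \<and> R r u y \<and> \<not> sat W R V y \<psi> else u)"

definition witness_closure ::
  "'w set \<Rightarrow> (rel5 \<Rightarrow> 'w \<Rightarrow> 'w \<Rightarrow> bool) \<Rightarrow> (nat \<Rightarrow> 'w set) \<Rightarrow> 'w \<Rightarrow> 'w set"
where
  "witness_closure W R V x = range (\<lambda>ps. foldr (witness W R V) ps x)"

lemma witness_correct:
  assumes "y \<in> W" "R r u y" "\<not> sat W R V y \<psi>"
  shows "witness W R V (r, \<psi>) u \<in> W" "R r u (witness W R V (r, \<psi>) u)"
    "\<not> sat W R V (witness W R V (r, \<psi>) u) \<psi>"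
proof -
  let ?P = "\<lambda>y. y \<in> W \<and> R r u y \<and> \<not> sat W R V y \<psi>"
  have "witness W R V (r, \<psi>) u = (SOME y. ?P y)"
    using assms by (auto simp: witness_def)
  moreover have "?P (SOME y. ?P y)"
    by (rule someI_ex) (use assms in blast)
  ultimately show "witness W R V (r, \<psi>) u \<in> W" "R r u (witness W R V (r, \<psi>) u)"
    "\<not> sat W R V (witness W R V (r, \<psi>) u) \<psi>"
    by simp_all
qed

lemma witness_in:
  assumes "u \<in> W"
  shows "witness W R V p u \<in> W"
proof (cases p)
  case (Pair r \<psi>)
  show ?thesis
  proof (cases "\<exists>y\<in>W. R r u y \<and> \<not> sat W R V y \<psi>")
    case True
    then obtain y where "y \<in> W" "R r u y" "\<not> sat W R V y \<psi>"
      by blast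
    from witness_correct(1)[OF this] show ?thesis
      unfolding Pair .
  next
    case False
    show ?thesis
      unfolding Pair witness_def prod.case if_not_P[OF False] by (rule assms)
  qed
qed

lemma witness_closure_subset:
  assumes "x \<in> W"
  shows "witness_closure W R V x \<subseteq> W"
proof -
  have "foldr (witness W R V) ps x \<in> W" for ps
    by (induction ps) (simp_all add: assms witness_in)
  then show ?thesis
    unfolding witness_closure_def by auto
qed

lemma countable_witness_closure: "countable (witness_closure W R V x)"
  unfolding witness_closure_def by simp

lemma self_in_witness_closure: "x \<in> witness_closure W R V x"
proof -
  have "x = foldr (witness W R V) [] x"
    by simp
  then show ?thesis
    unfolding witness_closure_def by (metis rangeI)
qed

lemma witness_closure_witnesses:
  assumes "u \<in> witness_closure W R V x" "y \<in> W" "R r u y" "\<not> sat W R V y \<psi>"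
  shows "\<exists>y'\<in>witness_closure W R V x. R r u y' \<and> \<not> sat W R V y' \<psi>"
proof -
  obtain ps where "u = foldr (witness W R V) ps x"
    using assms(1) unfolding witness_closure_def by blast
  then have "witness W R V (r, \<psi>) u = foldr (witness W R V) ((r, \<psi>) # ps) x"
    by simp
  then have "witness W R V (r, \<psi>) u \<in> witness_closure W R V x"
    unfolding witness_closure_def by (metis rangeI)
  with witness_correct[OF assms(2-4)] show ?thesis
    by blast
qed

lemma sat_witness_closed_substructure:
  assumes "U \<subseteq> W"
    and witnesses: "\<And>u r y \<psi>. u \<in> U \<Longrightarrow> y \<in> W \<Longrightarrow> R r u y \<Longrightarrow> \<not> sat W R V y \<psi> \<Longrightarrow>
      \<exists>y'\<in>U. R r u y' \<and> \<not> sat W R V y' \<psi>"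
    and "u \<in> U"
  shows "sat U R V u \<phi> \<longleftrightarrow> sat W R V u \<phi>"
  using \<open>u \<in> U\<close>
proof (induction \<phi> arbitrary: u)
  case (Box r \<psi>)
  have "sat U R V u (Box r \<psi>) \<longleftrightarrow> (\<forall>y\<in>U. R r u y \<longrightarrow> sat W R V y \<psi>)"
    using Box.IH by auto
  also have "\<dots> \<longleftrightarrow> (\<forall>y\<in>W. R r u y \<longrightarrow> sat W R V y \<psi>)"
    using \<open>U \<subseteq> W\<close> witnesses[OF Box.prems] by blast
  finally show ?case
    by simp
qed simp_all

lemma valid_in_if_countable_substructures_valid:
  assumes "\<And>U. U \<subseteq> W \<Longrightarrow> U \<noteq> {} \<Longrightarrow> countable U \<Longrightarrow> valid_in U R \<phi>"
  shows "valid_in W R \<phi>"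
  unfolding valid_in_def
proof (intro allI ballI)
  fix V x assume "x \<in> W"
  let ?U = "witness_closure W R V x"
  have "?U \<subseteq> W"
    using \<open>x \<in> W\<close> by (rule witness_closure_subset)
  moreover have "x \<in> ?U"
    by (rule self_in_witness_closure)
  then have "?U \<noteq> {}"
    by blast
  with \<open>?U \<subseteq> W\<close> have "valid_in ?U R \<phi>"
    using countable_witness_closure by (rule assms)
  then have "sat ?U R V x \<phi>"
    using \<open>x \<in> ?U\<close> unfolding valid_in_def by blast
  then show "sat W R V x \<phi>"
    using sat_witness_closed_substructure[OF \<open>?U \<subseteq> W\<close> witness_closure_witnesses \<open>x \<in> ?U\<close>]
    by simp
qed

lemma sat_image:
  assumes "inj_on f W" and "\<And>x y r. x \<in> W \<Longrightarrow> y \<in> W \<Longrightarrow> R r x y \<longleftrightarrow> S r (f x) (f y)"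
    and "x \<in> W"
  shows "sat W R V x \<phi> \<longleftrightarrow> sat (f ` W) S (\<lambda>p. f ` (V p \<inter> W)) (f x) \<phi>"
  using \<open>x \<in> W\<close>
proof (induction \<phi> arbitrary: x)
  case (Var p)
  then show ?case
    using \<open>inj_on f W\<close> by (auto simp: inj_on_image_mem_iff)
next
  case (Box r \<phi>)
  then show ?case
    using assms(2) by auto
qed simp_all

lemma valid_in_if_valid_in_image:
  assumes "inj_on f W" and "\<And>x y r. x \<in> W \<Longrightarrow> y \<in> W \<Longrightarrow> R r x y \<longleftrightarrow> S r (f x) (f y)"
    and "valid_in (f ` W) S \<phi>"
  shows "valid_in W R \<phi>"
  using assms(3) sat_image[where f = f and W = W and R = R and S = S, OF assms(1,2)]
  unfolding valid_in_def by blast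

lemma valid_in_countable_rcc5_structure:
  assumes "disjoint_open_sequence X B" "rcc5_structure W R" "countable W"
    and "\<And>f. f ` W \<subseteq> regular_closed_regions X \<Longrightarrow> valid_in (f ` W) (top_rel X) \<phi>"
  shows "valid_in W R \<phi>"
proof -
  obtain f where "inj_on f W" "f ` W \<subseteq> regular_closed_regions X"
    and rel: "\<And>x y r. x \<in> W \<Longrightarrow> y \<in> W \<Longrightarrow> R r x y \<longleftrightarrow> top_rel X r (f x) (f y)"
    using countable_rcc5_structure_embedding[OF assms(1-3)] by metis
  from \<open>inj_on f W\<close> rel assms(4)[OF \<open>f ` W \<subseteq> regular_closed_regions X\<close>] show ?thesis
    by (rule valid_in_if_valid_in_image)
qed

lemma LS_space_subset_L_RS5:
  assumes "disjoint_open_sequence X B"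
  shows "LS_space X \<subseteq> L_RS5 TYPE('w)"
proof
  fix \<phi> assume \<phi>: "\<phi> \<in> LS_space X"
  have "valid_in W R \<phi>" if "rcc5_structure W R" for W :: "'w set" and R
  proof (rule valid_in_if_countable_substructures_valid)
    fix U assume U: "U \<subseteq> W" "U \<noteq> {}" "countable U"
    show "valid_in U R \<phi>"
    proof (rule valid_in_countable_rcc5_structure[OF assms rcc5_structure_subset[OF that U(1,2)] U(3)])
      fix f assume "f ` U \<subseteq> regular_closed_regions X"
      with \<phi> U(2) show "valid_in (f ` U) (top_rel X) \<phi>"
        unfolding LS_space_def by blast
    qed
  qed
  then show "\<phi> \<in> L_RS5 TYPE('w)"
    unfolding L_RS5_def by blast
qed

lemma Lfin_space_subset_Lfin_RS5:
  assumes "disjoint_open_sequence X B"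
  shows "Lfin_space X \<subseteq> Lfin_RS5 TYPE('w)"
proof
  fix \<phi> assume \<phi>: "\<phi> \<in> Lfin_space X"
  have "valid_in U R \<phi>"
    if "rcc5_structure W R" "U \<subseteq> W" "U \<noteq> {}" "finite U" for W :: "'w set" and R U
  proof (rule valid_in_countable_rcc5_structure[OF assms rcc5_structure_subset[OF that(1-3)]])
    show "countable U"
      using \<open>finite U\<close> by (rule countable_finite)
    fix f assume "f ` U \<subseteq> regular_closed_regions X"
    with \<phi> that(3,4) show "valid_in (f ` U) (top_rel X) \<phi>"
      unfolding Lfin_space_def by blast
  qed
  then show "\<phi> \<in> Lfin_RS5 TYPE('w)"
    unfolding Lfin_RS5_def by blast
qed

lemma L_RS5_subset_LS_space: "L_RS5 TYPE('a set) \<subseteq> LS_space (X :: 'a topology)"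
proof
  fix \<phi> assume "\<phi> \<in> L_RS5 TYPE('a set)"
  then have "valid_in U (top_rel X) \<phi>" if "U \<subseteq> regular_closed_regions X" "U \<noteq> {}" for U
    using rcc5_structure_regular_closed_regions[OF that] by (simp add: L_RS5_def)
  then show "\<phi> \<in> LS_space X"
    by (simp add: LS_space_def)
qed

lemma Lfin_RS5_subset_Lfin_space: "Lfin_RS5 TYPE('a set) \<subseteq> Lfin_space (X :: 'a topology)"
proof
  fix \<phi> assume "\<phi> \<in> Lfin_RS5 TYPE('a set)"
  then have "valid_in U (top_rel X) \<phi>"
    if "U \<subseteq> regular_closed_regions X" "U \<noteq> {}" "finite U" for U
    using rcc5_structure_regular_closed_regions[OF that(1,2)] that(2,3) subset_refl
    unfolding Lfin_RS5_def by blast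
  then show "\<phi> \<in> Lfin_space X"
    by (simp add: Lfin_space_def)
qed

lemma LS_space_subset_LS_TOP:
  assumes "disjoint_open_sequence X B"
  shows "LS_space X \<subseteq> LS_TOP TYPE('b)"
proof
  fix \<phi> assume "\<phi> \<in> LS_space X"
  then have "\<phi> \<in> L_RS5 TYPE('b set)"
    by (rule subsetD[OF LS_space_subset_L_RS5[OF assms]])
  then show "\<phi> \<in> LS_TOP TYPE('b)"
    unfolding LS_TOP_def by (intro INT_I subsetD[OF L_RS5_subset_LS_space])
qed

lemma Lfin_space_subset_Lfin_TOP:
  assumes "disjoint_open_sequence X B"
  shows "Lfin_space X \<subseteq> Lfin_TOP TYPE('b)"
proof
  fix \<phi> assume "\<phi> \<in> Lfin_space X"
  then have "\<phi> \<in> Lfin_RS5 TYPE('b set)"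
    by (rule subsetD[OF Lfin_space_subset_Lfin_RS5[OF assms]])
  then show "\<phi> \<in> Lfin_TOP TYPE('b)"
    unfolding Lfin_TOP_def by (intro INT_I subsetD[OF Lfin_RS5_subset_Lfin_space])
qed

lemma LS_TOP_subset_LS_space: "LS_TOP TYPE('a) \<subseteq> LS_space (X :: 'a topology)"
  unfolding LS_TOP_def by (rule INF_lower) simp

lemma Lfin_TOP_subset_Lfin_space: "Lfin_TOP TYPE('a) \<subseteq> Lfin_space (X :: 'a topology)"
  unfolding Lfin_TOP_def by (rule INF_lower) simp

theorem theorem8p2:
  fixes n :: nat
  assumes "CARD('n::finite) = n" and "n > 0"
  shows
    \<comment> \<open>(1)\<close>
    "(LS_space (euclidean :: (real^'n) topology) \<subseteq> L_RS5 TYPE('w) \<and>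
    LS_space (euclidean :: (real^'n) topology) \<subseteq> LS_TOP TYPE('a) \<and>
    L_RS5 TYPE((real^'n) set) = LS_space (euclidean :: (real^'n) topology) \<and>
    LS_TOP TYPE(real^'n) = LS_space (euclidean :: (real^'n) topology) \<and>
    \<comment> \<open>(2)\<close>
    Lfin_space (euclidean :: (real^'n) topology) \<subseteq> Lfin_RS5 TYPE('w) \<and>
    Lfin_space (euclidean :: (real^'n) topology) \<subseteq> Lfin_TOP TYPE('a) \<and>
    Lfin_RS5 TYPE((real^'n) set) = Lfin_space (euclidean :: (real^'n) topology) \<and>
    Lfin_TOP TYPE(real^'n) = Lfin_space (euclidean :: (real^'n) topology))"
proof -
  obtain B where B: "disjoint_open_sequence (euclidean :: (real^'n) topology) B"
    using disjoint_open_sequence_euclidean_space by blast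
  show ?thesis
    by (intro conjI subset_antisym LS_TOP_subset_LS_space Lfin_TOP_subset_Lfin_space
        LS_space_subset_L_RS5[OF B] LS_space_subset_LS_TOP[OF B] L_RS5_subset_LS_space
        Lfin_space_subset_Lfin_RS5[OF B] Lfin_space_subset_Lfin_TOP[OF B] Lfin_RS5_subset_Lfin_space)
qed

end
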